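(* Let $(\mathcal V,\mathcal W,\lambda)$ be a FTvN system with center $C$. Then $\lambda(C)=\lambda(\mathcal V)\cap-\lambda(\mathcal V)$, i.e., $\lambda(C)$ is the lineality space of the convex cone $\lambda(\mathcal V)$. Consequently: (a) $\lambda(\mathcal V)$ is pointed if and only if $C=\{0\}$; (b) $\lambda(\mathcal V)$ is a linear subspace of $\mathcal W$ if and only if $C=\mathcal V$.
   Context: A Fan-Theobald-von Neumann (FTvN) system is a triple $(\mathcal V,\mathcal W,\lambda)$ where $\mathcal V,\mathcal W$ are real inner product spaces and $\lambda:\mathcal V\to\mathcal W$ is a map such that: (A1) $\|\lambda(x)\|=\|x\|$ for all $x$; (A2) $\langle x,y\rangle\le\langle\lambda(x),\lambda(y)\rangle$ for all $x,y$; (A3) for every $c\in\mathcal V$ and $q\in\lambda(\mathcal V)$ there exists $x$ with $\lambda(x)=q$ and $\langle c,x\rangle=\langle\lambda(c),\lambda(x)\rangle$. Elements $x,y$ commute if $\langle x,y\rangle=\langle\lambda(x),\lambda(y)\rangle$; the center $C$ is the set of elements commuting with every element of $\mathcal V$. A cone $K$ is pointed if $K\cap -K=\{0\}$. *)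

theory Defs
  imports "HOL-Analysis.Analysis"
begin

definition FTvN :: "('v::real_inner \<Rightarrow> 'w::real_inner) \<Rightarrow> bool" where
  "FTvN lam \<longleftrightarrow>
     (\<forall>x. norm (lam x) = norm x) \<and>
     (\<forall>x y. inner x y \<le> inner (lam x) (lam y)) \<and>
     (\<forall>c. \<forall>q \<in> range lam. \<exists>x. lam x = q \<and> inner c x = inner (lam c) (lam x))"

definition commute :: "('v::real_inner \<Rightarrow> 'w::real_inner) \<Rightarrow> 'v \<Rightarrow> 'v \<Rightarrow> bool" where
  "commute lam x y \<longleftrightarrow> inner x y = inner (lam x) (lam y)"

definition center :: "('v::real_inner \<Rightarrow> 'w::real_inner) \<Rightarrow> 'v set" where
  "center lam = {c. \<forall>x. commute lam c x}"

definition pointed :: "'a::real_vector set \<Rightarrow> bool" where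
  "pointed K \<longleftrightarrow> K \<inter> uminus ` K = {0}"

end

theory Submission
  imports Defs
begin

text \<open>
  For an element \<open>x\<close> of norm \<open>r\<close>, the vector \<open>-\<lambda>(x)\<close> lies in \<open>\<lambda>(V)\<close> iff \<open>\<lambda>(-x) = -\<lambda>(x)\<close>:
  axiom (A3) supplies a preimage \<open>z\<close> commuting with \<open>x\<close>, and then \<open>\<langle>x,z\<rangle> = -r\<^sup>2\<close> with
  \<open>\<parallel>z\<parallel> = r\<close> forces \<open>z = -x\<close>. The same equality case of Cauchy-Schwarz shows that \<open>x\<close>
  commutes with \<open>-x\<close> iff \<open>\<lambda>(-x) = -\<lambda>(x)\<close>, and together with (A2) applied to \<open>x\<close> and \<open>-x\<close>
  this holds iff \<open>x\<close> is central. Hence \<open>\<lambda>(C) = \<lambda>(V) \<inter> -\<lambda>(V)\<close>; the two consequences follow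
  because \<open>\<lambda>\<close> vanishes only at \<open>0\<close>, and because \<open>C = V\<close> makes \<open>\<lambda>\<close> inner-product preserving,
  hence linear.
\<close>

lemma eq_uminus_if_inner_eq_neg_norm:
  fixes a b :: "'a::real_inner"
  assumes "norm b = norm a" and "inner a b = - (norm a)\<^sup>2"
  shows "b = - a"
  using assms by (simp add: vector_eq[of b "- a"] power2_norm_eq_inner[symmetric] inner_commute)

lemma linear_if_inner_preserving:
  fixes f :: "'a::real_inner \<Rightarrow> 'b::real_inner"
  assumes f: "\<And>x y. inner (f x) (f y) = inner x y"
  shows "linear f"
proof -
  have combination: "f a - (s *\<^sub>R f b + t *\<^sub>R f c) = 0 \<longleftrightarrow> a - (s *\<^sub>R b + t *\<^sub>R c) = 0"
    for a b c s t
  proof -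
    let ?d = "f a - (s *\<^sub>R f b + t *\<^sub>R f c)" and ?e = "a - (s *\<^sub>R b + t *\<^sub>R c)"
    have "inner ?d ?d = inner ?e ?e"
      by (simp add: inner_diff_left inner_diff_right inner_add_left inner_add_right f)
    then show ?thesis
      by (metis inner_eq_zero_iff)
  qed
  show ?thesis
  proof (rule linearI)
    show "f (x + y) = f x + f y" for x y
      using combination[of "x + y" 1 x 1 y] by simp
    show "f (r *\<^sub>R x) = r *\<^sub>R f x" for r x
      using combination[of "r *\<^sub>R x" r x 0 x] by simp
  qed
qed

context
  fixes lam :: "'v::real_inner \<Rightarrow> 'w::real_inner"
  assumes FTvN: "FTvN lam"
begin

lemma FTvN_norm: "norm (lam x) = norm x"
  using FTvN unfolding FTvN_def by blast

lemma FTvN_inner_le: "inner x y \<le> inner (lam x) (lam y)"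
  using FTvN unfolding FTvN_def by blast

lemma FTvN_commuting_preimage:
  assumes "q \<in> range lam"
  obtains z where "lam z = q" and "commute lam c z"
  using FTvN assms unfolding FTvN_def commute_def by blast

lemma FTvN_eq_0_iff: "lam x = 0 \<longleftrightarrow> x = 0"
  by (metis FTvN_norm norm_eq_zero)

lemma FTvN_zero: "lam 0 = 0"
  by (simp add: FTvN_eq_0_iff)

lemma commute_uminus_iff: "commute lam x (- x) \<longleftrightarrow> lam (- x) = - lam x"
proof
  assume "commute lam x (- x)"
  then have "inner (lam x) (lam (- x)) = - (norm (lam x))\<^sup>2"
    unfolding commute_def by (metis FTvN_norm inner_minus_right power2_norm_eq_inner)
  then show "lam (- x) = - lam x"
    by (rule eq_uminus_if_inner_eq_neg_norm[rotated]) (metis FTvN_norm norm_minus_cancel)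
next
  assume "lam (- x) = - lam x"
  then show "commute lam x (- x)"
    unfolding commute_def by (metis FTvN_norm inner_minus_right power2_norm_eq_inner)
qed

lemma center_iff_lam_uminus: "x \<in> center lam \<longleftrightarrow> lam (- x) = - lam x"
proof
  assume "x \<in> center lam"
  then show "lam (- x) = - lam x"
    by (simp add: center_def commute_uminus_iff[symmetric])
next
  assume odd: "lam (- x) = - lam x"
  have "commute lam x y" for y
    using FTvN_inner_le[of x y] FTvN_inner_le[of "- x" y]
    by (simp add: commute_def odd)
  then show "x \<in> center lam"
    unfolding center_def by blast
qed

lemma uminus_lam_in_range_iff: "- lam x \<in> range lam \<longleftrightarrow> lam (- x) = - lam x"
proof
  assume "- lam x \<in> range lam"
  then obtain z where z: "lam z = - lam x" and "commute lam x z"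
    by (rule FTvN_commuting_preimage)
  then have "inner x z = - (norm x)\<^sup>2"
    unfolding commute_def by (metis FTvN_norm inner_minus_right power2_norm_eq_inner z(1))
  then have "z = - x"
    by (rule eq_uminus_if_inner_eq_neg_norm[rotated]) (metis FTvN_norm norm_minus_cancel z(1))
  with z show "lam (- x) = - lam x"
    by simp
qed (metis rangeI)

lemma center_iff_uminus_lam_in_range: "x \<in> center lam \<longleftrightarrow> - lam x \<in> range lam"
  by (simp add: center_iff_lam_uminus uminus_lam_in_range_iff)

lemma image_center_eq_lineality: "lam ` center lam = range lam \<inter> uminus ` range lam"
proof (intro equalityI subsetI)
  fix q
  assume "q \<in> lam ` center lam"
  then show "q \<in> range lam \<inter> uminus ` range lam"
    by (auto simp: center_iff_uminus_lam_in_range intro: image_eqI[of _ _ "- _"])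
next
  fix q
  assume "q \<in> range lam \<inter> uminus ` range lam"
  then obtain x where "q = lam x" and "- lam x \<in> range lam"
    by (auto simp: image_iff) (metis minus_minus)
  then show "q \<in> lam ` center lam"
    by (simp add: center_iff_uminus_lam_in_range)
qed

lemma pointed_range_iff: "pointed (range lam) \<longleftrightarrow> center lam = {0}"
proof -
  have center_0: "0 \<in> center lam"
    by (simp add: center_iff_lam_uminus FTvN_zero)
  have "pointed (range lam) \<longleftrightarrow> lam ` center lam = {0}"
    by (simp add: pointed_def image_center_eq_lineality)
  also have "\<dots> \<longleftrightarrow> center lam = {0}"
  proof
    assume "lam ` center lam = {0}"
    then have "center lam \<subseteq> {0}"
      using FTvN_eq_0_iff by auto
    with center_0 show "center lam = {0}"
      by auto
  qed (simp add: FTvN_zero)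
  finally show ?thesis .
qed

lemma subspace_range_iff: "subspace (range lam) \<longleftrightarrow> center lam = UNIV"
proof
  assume "subspace (range lam)"
  then show "center lam = UNIV"
    by (auto simp: center_iff_uminus_lam_in_range subspace_neg)
next
  assume "center lam = UNIV"
  then have "x \<in> center lam" for x
    by simp
  then have "inner (lam x) (lam y) = inner x y" for x y
    by (simp add: center_def commute_def)
  then have "linear lam"
    by (rule linear_if_inner_preserving)
  then show "subspace (range lam)"
    by (rule linear_subspace_image[OF _ subspace_UNIV])
qed

end

theorem corollary6p4:
  fixes lam :: "'v::real_inner \<Rightarrow> 'w::real_inner"
  assumes "FTvN lam"
  shows "lam ` center lam = range lam \<inter> uminus ` range lam \<and>
         (pointed (range lam) \<longleftrightarrow> center lam = {0}) \<and>
         (subspace (range lam) \<longleftrightarrow> center lam = UNIV)"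
  using image_center_eq_lineality[OF assms] pointed_range_iff[OF assms]
    subspace_range_iff[OF assms]
  by blast

end
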